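(* Let $\mathbf{x}:[-1,1]^2\to\mathbb{R}^2$, $\mathbf{x}(\xi,\eta)=(x(\xi,\eta),y(\xi,\eta))$, be a sufficiently smooth ($C^2$) map whose Jacobian $\mathbf{J}=\begin{bmatrix} x_\xi & x_\eta\\ y_\xi & y_\eta\end{bmatrix}$ is nonsingular everywhere on $[-1,1]^2$. Let $F(-1,\cdot)$ and $F(\cdot,-1)$ be given differentiable functions on $[-1,1]$ (transformed Dirichlet data on the edges $\xi=-1$ and $\eta=-1$) agreeing at the corner $(-1,-1)$, and let $u_{nBC}$, $u_{nCD}$ be given differentiable Neumann data on the images of the edges $\xi=1$ and $\eta=1$. Define $S_{BC},T_{BC},S_{CD},T_{CD}$, the flags $\lambda_B,\lambda_C,\lambda_D$, the corner quantities, the polynomials $\rho_0,\rho_1,\upsilon_0,\upsilon_1,\omega_1$ and the operators $Pg$, $PF^g$ as in the context. Assume the compatibility conditions: if $\lambda_B=0$ then $F_\xi(1,-1)=T_{BC}(-1)$; if $\lambda_D=0$ then $F_\eta(-1,1)=T_{CD}(-1)$; if $\lambda_C=0$ then $T_{CD}'(1)-S_{CD}'(1)F^a_\xi(1,1)=T_{BC}'(1)-S_{BC}'(1)F^a_\eta(1,1)$. Then for every sufficiently differentiable $g:[-1,1]^2\to\mathbb{R}$, the function $V=g-Pg+PF^g$ satisfies, for all $\xi,\eta\in[-1,1]$, $V(-1,\eta)=F(-1,\eta)$, $V(\xi,-1)=F(\xi,-1)$, $$V_\xi(1,\eta)+S_{BC}(\eta)V_\eta(1,\eta)=T_{BC}(\eta),\qquad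 V_\eta(\xi,1)+S_{CD}(\xi)V_\xi(\xi,1)=T_{CD}(\xi).$$
   Context: Setting: a curved quadrilateral $ABCD$ is the image of $[-1,1]^2$ under $\mathbf{x}$, with $A=\mathbf{x}(-1,-1)$, $B=\mathbf{x}(1,-1)$, $C=\mathbf{x}(1,1)$, $D=\mathbf{x}(-1,1)$; edges $AB:\eta=-1$, $BC:\xi=1$, $CD:\eta=1$, $AD:\xi=-1$. A field $u$ is represented as $V(\xi,\eta)=u(\mathbf{x}(\xi,\eta))$; Dirichlet conditions on $AB$, $AD$ and Neumann conditions $\mathbf n\cdot\nabla u=u_{nBC}$ on $BC$ and $\mathbf n\cdot\nabla u=u_{nCD}$ on $CD$ become the stated conditions on $V$. Notation: $F(1,-1):=F(\xi,-1)|_{\xi=1}$, $F(-1,1):=F(-1,\eta)|_{\eta=1}$, $F(-1,-1)$ the common corner value, $F_\xi(1,-1):=\frac{d}{d\xi}F(\xi,-1)|_{\xi=1}$, $F_\eta(-1,1):=\frac{d}{d\eta}F(-1,\eta)|_{\eta=1}$. Edge coefficients: $S_{BC}(\eta)=-\frac{\mathbf{x}_\xi(1,\eta)\cdot\mathbf{x}_\eta(1,\eta)}{\|\mathbf{x}_\eta(1,\eta)\|^2}$ (equivalently $K_{yBC}/K_{xBC}$ with $K_{xBC}=\|\mathbf{x}_\eta(1,\eta)\|/\det\mathbf{J}(1,\eta)$, $K_{yBC}=-\mathbf{x}_\xi(1,\eta)\cdot\mathbf{x}_\eta(1,\eta)/(\|\mathbf{x}_\eta(1,\eta)\|\det\mathbf{J}(1,\eta))$),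 $T_{BC}(\eta)=u_{nBC}(\mathbf{x}(1,\eta))/K_{xBC}(\eta)$; $K_{xCD}(\xi)=-\frac{\mathbf{x}_\xi(\xi,1)\cdot\mathbf{x}_\eta(\xi,1)}{\|\mathbf{x}_\xi(\xi,1)\|\det\mathbf{J}(\xi,1)}$, $K_{yCD}(\xi)=\frac{\|\mathbf{x}_\xi(\xi,1)\|}{\det\mathbf{J}(\xi,1)}$, $S_{CD}=K_{xCD}/K_{yCD}$, $T_{CD}(\xi)=u_{nCD}(\mathbf{x}(\xi,1))/K_{yCD}(\xi)$. Flags: $\lambda_B=0$ if $\mathbf{x}_\xi(1,-1)\cdot\mathbf{x}_\eta(1,-1)=0$, else $1$; $\lambda_C=0$ if $\mathbf{x}_\xi(1,1)\cdot\mathbf{x}_\eta(1,1)=0$, else $1$; $\lambda_D=0$ if $\mathbf{x}_\xi(-1,1)\cdot\mathbf{x}_\eta(-1,1)=0$, else $1$. Any term multiplied by a flag equal to $0$ is taken to be $0$ (so quantities only defined when the flag is $1$ are never needed otherwise). Corner quantities: $F^a_\eta(1,-1)=\frac{T_{BC}(-1)-F_\xi(1,-1)}{S_{BC}(-1)}$ (if $\lambda_B=1$); $F^a_\xi(-1,1)=\frac{T_{CD}(-1)-F_\eta(-1,1)}{S_{CD}(-1)}$ (if $\lambda_D=1$); $F^a_\xi(1,1)=\frac{T_{BC}(1)-S_{BC}(1)T_{CD}(1)}{1-S_{BC}(1)S_{CD}(1)}$, $F^a_\eta(1,1)=\frac{T_{CD}(1)-S_{CD}(1)T_{BC}(1)}{1-S_{BC}(1)S_{CD}(1)}$;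 $R_C=[T_{CD}'(1)-S_{CD}'(1)F^a_\xi(1,1)]-[T_{BC}'(1)-S_{BC}'(1)F^a_\eta(1,1)]$; $F^g_{\xi\xi}(1,1)=\frac{S_{BC}(1)}{S_{CD}(1)}g_{\eta\eta}(1,1)+\frac{R_C}{S_{CD}(1)}$ (if $\lambda_C=1$); $F^g_{\xi\eta}(1,1)=T_{BC}'(1)-S_{BC}'(1)F^a_\eta(1,1)-S_{BC}(1)g_{\eta\eta}(1,1)$. Polynomials with $\phi_0(t)=\tfrac12(1-t)$, $\phi_1(t)=\tfrac12(1+t)$: $\rho_0=\phi_0^3(1+3\phi_1+6\phi_1^2)$, $\rho_1=\phi_1^3(1+3\phi_0+6\phi_0^2)$, $\upsilon_0=2\phi_0^3\phi_1(1+3\phi_1)$, $\upsilon_1=-2\phi_1^3\phi_0(1+3\phi_0)$, $\omega_1=2\phi_1^3\phi_0^2$. $F^g_\xi(1,\eta)=T_{BC}(\eta)-S_{BC}(\eta)\{g_\eta(1,\eta)-[g(1,-1)-F(1,-1)]\rho_0'(\eta)-[g_\eta(1,1)-F^a_\eta(1,1)]\upsilon_1'(\eta)-\lambda_B[g_\eta(1,-1)-F^a_\eta(1,-1)]\upsilon_0'(\eta)\}$; $F^g_\eta(\xi,1)=T_{CD}(\xi)-S_{CD}(\xi)\{g_\xi(\xi,1)-[g(-1,1)-F(-1,1)]\rho_0'(\xi)-[g_\xi(1,1)-F^a_\xi(1,1)]\upsilon_1'(\xi)-\lambda_D[g_\xi(-1,1)-F^a_\xi(-1,1)]\upsilon_0'(\xi)-\lambda_C[g_{\xi\xi}(1,1)-F^g_{\xi\xi}(1,1)]\omega_1'(\xi)\}$.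 $Pg(\xi,\eta)=g(-1,\eta)\rho_0(\xi)+g_\xi(1,\eta)\upsilon_1(\xi)+g(\xi,-1)\rho_0(\eta)+g_\eta(\xi,1)\upsilon_1(\eta)-[g(-1,-1)\rho_0(\eta)+g_\eta(-1,1)\upsilon_1(\eta)]\rho_0(\xi)-[g_\xi(1,-1)\rho_0(\eta)+g_{\xi\eta}(1,1)\upsilon_1(\eta)]\upsilon_1(\xi)+\lambda_Bg_\eta(1,-1)\upsilon_0(\eta)\rho_1(\xi)+[\lambda_Dg_\xi(-1,1)\upsilon_0(\xi)+\lambda_Cg_{\xi\xi}(1,1)\omega_1(\xi)]\rho_1(\eta)$. $PF^g(\xi,\eta)=F(-1,\eta)\rho_0(\xi)+F^g_\xi(1,\eta)\upsilon_1(\xi)+F(\xi,-1)\rho_0(\eta)+F^g_\eta(\xi,1)\upsilon_1(\eta)-[F(-1,-1)\rho_0(\eta)+F_\eta(-1,1)\upsilon_1(\eta)]\rho_0(\xi)-[F_\xi(1,-1)\rho_0(\eta)+F^g_{\xi\eta}(1,1)\upsilon_1(\eta)]\upsilon_1(\xi)+\lambda_BF^a_\eta(1,-1)\upsilon_0(\eta)\rho_1(\xi)+[\lambda_DF^a_\xi(-1,1)\upsilon_0(\xi)+\lambda_CF^g_{\xi\xi}(1,1)\omega_1(\xi)]\rho_1(\eta)$. *)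

theory Defs
  imports "HOL-Analysis.Analysis"
begin

definition pxi :: "(real \<Rightarrow> real \<Rightarrow> real) \<Rightarrow> real \<Rightarrow> real \<Rightarrow> real" where
  "pxi f a b = deriv (\<lambda>s. f s b) a"

definition peta :: "(real \<Rightarrow> real \<Rightarrow> real) \<Rightarrow> real \<Rightarrow> real \<Rightarrow> real" where
  "peta f a b = deriv (\<lambda>t. f a t) b"

definition C1_on :: "(real \<times> real) set \<Rightarrow> (real \<Rightarrow> real \<Rightarrow> real) \<Rightarrow> bool" where
  "C1_on U f \<longleftrightarrow>
     (\<forall>a b. (a, b) \<in> U \<longrightarrow> (\<lambda>s. f s b) differentiable (at a) \<and> (\<lambda>t. f a t) differentiable (at b)) \<and>
     continuous_on U (\<lambda>p. f (fst p) (snd p)) \<and>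
     continuous_on U (\<lambda>p. pxi f (fst p) (snd p)) \<and>
     continuous_on U (\<lambda>p. peta f (fst p) (snd p))"

definition C2_on :: "(real \<times> real) set \<Rightarrow> (real \<Rightarrow> real \<Rightarrow> real) \<Rightarrow> bool" where
  "C2_on U f \<longleftrightarrow> C1_on U f \<and> C1_on U (pxi f) \<and> C1_on U (peta f)"

definition dotJ :: "(real \<Rightarrow> real \<Rightarrow> real) \<Rightarrow> (real \<Rightarrow> real \<Rightarrow> real) \<Rightarrow> real \<Rightarrow> real \<Rightarrow> real" where
  "dotJ X Y a b = pxi X a b * peta X a b + pxi Y a b * peta Y a b"

definition nxi2 :: "(real \<Rightarrow> real \<Rightarrow> real) \<Rightarrow> (real \<Rightarrow> real \<Rightarrow> real) \<Rightarrow> real \<Rightarrow> real \<Rightarrow> real" where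
  "nxi2 X Y a b = (pxi X a b)\<^sup>2 + (pxi Y a b)\<^sup>2"

definition neta2 :: "(real \<Rightarrow> real \<Rightarrow> real) \<Rightarrow> (real \<Rightarrow> real \<Rightarrow> real) \<Rightarrow> real \<Rightarrow> real \<Rightarrow> real" where
  "neta2 X Y a b = (peta X a b)\<^sup>2 + (peta Y a b)\<^sup>2"

definition detJ :: "(real \<Rightarrow> real \<Rightarrow> real) \<Rightarrow> (real \<Rightarrow> real \<Rightarrow> real) \<Rightarrow> real \<Rightarrow> real \<Rightarrow> real" where
  "detJ X Y a b = pxi X a b * peta Y a b - peta X a b * pxi Y a b"

definition S_BC :: "(real \<Rightarrow> real \<Rightarrow> real) \<Rightarrow> (real \<Rightarrow> real \<Rightarrow> real) \<Rightarrow> real \<Rightarrow> real" where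
  "S_BC X Y \<eta> = - dotJ X Y 1 \<eta> / neta2 X Y 1 \<eta>"

definition KxBC :: "(real \<Rightarrow> real \<Rightarrow> real) \<Rightarrow> (real \<Rightarrow> real \<Rightarrow> real) \<Rightarrow> real \<Rightarrow> real" where
  "KxBC X Y \<eta> = sqrt (neta2 X Y 1 \<eta>) / detJ X Y 1 \<eta>"

definition T_BC :: "(real \<Rightarrow> real \<Rightarrow> real) \<Rightarrow> (real \<Rightarrow> real \<Rightarrow> real) \<Rightarrow> (real \<times> real \<Rightarrow> real) \<Rightarrow> real \<Rightarrow> real" where
  "T_BC X Y unBC \<eta> = unBC (X 1 \<eta>, Y 1 \<eta>) / KxBC X Y \<eta>"

definition KxCD :: "(real \<Rightarrow> real \<Rightarrow> real) \<Rightarrow> (real \<Rightarrow> real \<Rightarrow> real) \<Rightarrow> real \<Rightarrow> real" where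
  "KxCD X Y \<xi> = - dotJ X Y \<xi> 1 / (sqrt (nxi2 X Y \<xi> 1) * detJ X Y \<xi> 1)"

definition KyCD :: "(real \<Rightarrow> real \<Rightarrow> real) \<Rightarrow> (real \<Rightarrow> real \<Rightarrow> real) \<Rightarrow> real \<Rightarrow> real" where
  "KyCD X Y \<xi> = sqrt (nxi2 X Y \<xi> 1) / detJ X Y \<xi> 1"

definition S_CD :: "(real \<Rightarrow> real \<Rightarrow> real) \<Rightarrow> (real \<Rightarrow> real \<Rightarrow> real) \<Rightarrow> real \<Rightarrow> real" where
  "S_CD X Y \<xi> = KxCD X Y \<xi> / KyCD X Y \<xi>"

definition T_CD :: "(real \<Rightarrow> real \<Rightarrow> real) \<Rightarrow> (real \<Rightarrow> real \<Rightarrow> real) \<Rightarrow> (real \<times> real \<Rightarrow> real) \<Rightarrow> real \<Rightarrow> real" where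
  "T_CD X Y unCD \<xi> = unCD (X \<xi> 1, Y \<xi> 1) / KyCD X Y \<xi>"

definition lamB :: "(real \<Rightarrow> real \<Rightarrow> real) \<Rightarrow> (real \<Rightarrow> real \<Rightarrow> real) \<Rightarrow> real" where
  "lamB X Y = (if dotJ X Y 1 (-1) = 0 then 0 else 1)"

definition lamC :: "(real \<Rightarrow> real \<Rightarrow> real) \<Rightarrow> (real \<Rightarrow> real \<Rightarrow> real) \<Rightarrow> real" where
  "lamC X Y = (if dotJ X Y 1 1 = 0 then 0 else 1)"

definition lamD :: "(real \<Rightarrow> real \<Rightarrow> real) \<Rightarrow> (real \<Rightarrow> real \<Rightarrow> real) \<Rightarrow> real" where
  "lamD X Y = (if dotJ X Y (-1) 1 = 0 then 0 else 1)"

(* Corner quantities.  FL = F(-1,.), FB = F(.,-1). *)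
definition FaEtaB :: "(real \<Rightarrow> real \<Rightarrow> real) \<Rightarrow> (real \<Rightarrow> real \<Rightarrow> real) \<Rightarrow> (real \<times> real \<Rightarrow> real) \<Rightarrow> (real \<Rightarrow> real) \<Rightarrow> real" where
  "FaEtaB X Y unBC FB = (T_BC X Y unBC (-1) - deriv FB 1) / S_BC X Y (-1)"

definition FaXiD :: "(real \<Rightarrow> real \<Rightarrow> real) \<Rightarrow> (real \<Rightarrow> real \<Rightarrow> real) \<Rightarrow> (real \<times> real \<Rightarrow> real) \<Rightarrow> (real \<Rightarrow> real) \<Rightarrow> real" where
  "FaXiD X Y unCD FL = (T_CD X Y unCD (-1) - deriv FL 1) / S_CD X Y (-1)"

definition FaXiC :: "(real \<Rightarrow> real \<Rightarrow> real) \<Rightarrow> (real \<Rightarrow> real \<Rightarrow> real) \<Rightarrow> (real \<times> real \<Rightarrow> real) \<Rightarrow> (real \<times> real \<Rightarrow> real) \<Rightarrow> real" where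
  "FaXiC X Y unBC unCD =
     (T_BC X Y unBC 1 - S_BC X Y 1 * T_CD X Y unCD 1) / (1 - S_BC X Y 1 * S_CD X Y 1)"

definition FaEtaC :: "(real \<Rightarrow> real \<Rightarrow> real) \<Rightarrow> (real \<Rightarrow> real \<Rightarrow> real) \<Rightarrow> (real \<times> real \<Rightarrow> real) \<Rightarrow> (real \<times> real \<Rightarrow> real) \<Rightarrow> real" where
  "FaEtaC X Y unBC unCD =
     (T_CD X Y unCD 1 - S_CD X Y 1 * T_BC X Y unBC 1) / (1 - S_BC X Y 1 * S_CD X Y 1)"

definition RC :: "(real \<Rightarrow> real \<Rightarrow> real) \<Rightarrow> (real \<Rightarrow> real \<Rightarrow> real) \<Rightarrow> (real \<times> real \<Rightarrow> real) \<Rightarrow> (real \<times> real \<Rightarrow> real) \<Rightarrow> real" where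
  "RC X Y unBC unCD =
     (deriv (T_CD X Y unCD) 1 - deriv (S_CD X Y) 1 * FaXiC X Y unBC unCD)
   - (deriv (T_BC X Y unBC) 1 - deriv (S_BC X Y) 1 * FaEtaC X Y unBC unCD)"

definition FgXiXi :: "(real \<Rightarrow> real \<Rightarrow> real) \<Rightarrow> (real \<Rightarrow> real \<Rightarrow> real) \<Rightarrow> (real \<times> real \<Rightarrow> real) \<Rightarrow> (real \<times> real \<Rightarrow> real) \<Rightarrow> (real \<Rightarrow> real \<Rightarrow> real) \<Rightarrow> real" where
  "FgXiXi X Y unBC unCD g =
     S_BC X Y 1 / S_CD X Y 1 * peta (peta g) 1 1 + RC X Y unBC unCD / S_CD X Y 1"

definition FgXiEta :: "(real \<Rightarrow> real \<Rightarrow> real) \<Rightarrow> (real \<Rightarrow> real \<Rightarrow> real) \<Rightarrow> (real \<times> real \<Rightarrow> real) \<Rightarrow> (real \<times> real \<Rightarrow> real) \<Rightarrow> (real \<Rightarrow> real \<Rightarrow> real) \<Rightarrow> real" where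
  "FgXiEta X Y unBC unCD g =
     deriv (T_BC X Y unBC) 1 - deriv (S_BC X Y) 1 * FaEtaC X Y unBC unCD
     - S_BC X Y 1 * peta (peta g) 1 1"

definition phi0 :: "real \<Rightarrow> real" where "phi0 t = (1 - t) / 2"
definition phi1 :: "real \<Rightarrow> real" where "phi1 t = (1 + t) / 2"
definition rho0 :: "real \<Rightarrow> real" where
  "rho0 t = phi0 t ^ 3 * (1 + 3 * phi1 t + 6 * (phi1 t)\<^sup>2)"
definition rho1 :: "real \<Rightarrow> real" where
  "rho1 t = phi1 t ^ 3 * (1 + 3 * phi0 t + 6 * (phi0 t)\<^sup>2)"
definition ups0 :: "real \<Rightarrow> real" where
  "ups0 t = 2 * phi0 t ^ 3 * phi1 t * (1 + 3 * phi1 t)"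
definition ups1 :: "real \<Rightarrow> real" where
  "ups1 t = - 2 * phi1 t ^ 3 * phi0 t * (1 + 3 * phi0 t)"
definition om1 :: "real \<Rightarrow> real" where
  "om1 t = 2 * phi1 t ^ 3 * (phi0 t)\<^sup>2"

definition FgXi :: "(real \<Rightarrow> real \<Rightarrow> real) \<Rightarrow> (real \<Rightarrow> real \<Rightarrow> real) \<Rightarrow> (real \<times> real \<Rightarrow> real) \<Rightarrow> (real \<times> real \<Rightarrow> real) \<Rightarrow> (real \<Rightarrow> real) \<Rightarrow> (real \<Rightarrow> real \<Rightarrow> real) \<Rightarrow> real \<Rightarrow> real" where
  "FgXi X Y unBC unCD FB g \<eta> =
     T_BC X Y unBC \<eta> - S_BC X Y \<eta> *
       (peta g 1 \<eta> - (g 1 (-1) - FB 1) * deriv rho0 \<eta>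
        - (peta g 1 1 - FaEtaC X Y unBC unCD) * deriv ups1 \<eta>
        - lamB X Y * (peta g 1 (-1) - FaEtaB X Y unBC FB) * deriv ups0 \<eta>)"

definition FgEta :: "(real \<Rightarrow> real \<Rightarrow> real) \<Rightarrow> (real \<Rightarrow> real \<Rightarrow> real) \<Rightarrow> (real \<times> real \<Rightarrow> real) \<Rightarrow> (real \<times> real \<Rightarrow> real) \<Rightarrow> (real \<Rightarrow> real) \<Rightarrow> (real \<Rightarrow> real \<Rightarrow> real) \<Rightarrow> real \<Rightarrow> real" where
  "FgEta X Y unBC unCD FL g \<xi> =
     T_CD X Y unCD \<xi> - S_CD X Y \<xi> *
       (pxi g \<xi> 1 - (g (-1) 1 - FL 1) * deriv rho0 \<xi>
        - (pxi g 1 1 - FaXiC X Y unBC unCD) * deriv ups1 \<xi>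
        - lamD X Y * (pxi g (-1) 1 - FaXiD X Y unCD FL) * deriv ups0 \<xi>
        - lamC X Y * (pxi (pxi g) 1 1 - FgXiXi X Y unBC unCD g) * deriv om1 \<xi>)"

(* Pg; g_{xi eta}(1,1) is taken as d/deta of g_xi *)
definition Pg :: "(real \<Rightarrow> real \<Rightarrow> real) \<Rightarrow> (real \<Rightarrow> real \<Rightarrow> real) \<Rightarrow> (real \<Rightarrow> real \<Rightarrow> real) \<Rightarrow> real \<Rightarrow> real \<Rightarrow> real" where
  "Pg X Y g \<xi> \<eta> =
     g (-1) \<eta> * rho0 \<xi> + pxi g 1 \<eta> * ups1 \<xi> + g \<xi> (-1) * rho0 \<eta> + peta g \<xi> 1 * ups1 \<eta>
     - (g (-1) (-1) * rho0 \<eta> + peta g (-1) 1 * ups1 \<eta>) * rho0 \<xi>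
     - (pxi g 1 (-1) * rho0 \<eta> + peta (pxi g) 1 1 * ups1 \<eta>) * ups1 \<xi>
     + lamB X Y * peta g 1 (-1) * ups0 \<eta> * rho1 \<xi>
     + (lamD X Y * pxi g (-1) 1 * ups0 \<xi> + lamC X Y * pxi (pxi g) 1 1 * om1 \<xi>) * rho1 \<eta>"

definition PFg :: "(real \<Rightarrow> real \<Rightarrow> real) \<Rightarrow> (real \<Rightarrow> real \<Rightarrow> real) \<Rightarrow> (real \<times> real \<Rightarrow> real) \<Rightarrow> (real \<times> real \<Rightarrow> real) \<Rightarrow> (real \<Rightarrow> real) \<Rightarrow> (real \<Rightarrow> real) \<Rightarrow> (real \<Rightarrow> real \<Rightarrow> real) \<Rightarrow> real \<Rightarrow> real \<Rightarrow> real" where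
  "PFg X Y unBC unCD FL FB g \<xi> \<eta> =
     FL \<eta> * rho0 \<xi> + FgXi X Y unBC unCD FB g \<eta> * ups1 \<xi> + FB \<xi> * rho0 \<eta>
     + FgEta X Y unBC unCD FL g \<xi> * ups1 \<eta>
     - (FL (-1) * rho0 \<eta> + deriv FL 1 * ups1 \<eta>) * rho0 \<xi>
     - (deriv FB 1 * rho0 \<eta> + FgXiEta X Y unBC unCD g * ups1 \<eta>) * ups1 \<xi>
     + lamB X Y * FaEtaB X Y unBC FB * ups0 \<eta> * rho1 \<xi>
     + (lamD X Y * FaXiD X Y unCD FL * ups0 \<xi> + lamC X Y * FgXiXi X Y unBC unCD g * om1 \<xi>) * rho1 \<eta>"

definition Vfun :: "(real \<Rightarrow> real \<Rightarrow> real) \<Rightarrow> (real \<Rightarrow> real \<Rightarrow> real) \<Rightarrow> (real \<times> real \<Rightarrow> real) \<Rightarrow> (real \<times> real \<Rightarrow> real) \<Rightarrow> (real \<Rightarrow> real) \<Rightarrow> (real \<Rightarrow> real) \<Rightarrow> (real \<Rightarrow> real \<Rightarrow> real) \<Rightarrow> real \<Rightarrow> real \<Rightarrow> real" where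
  "Vfun X Y unBC unCD FL FB g \<xi> \<eta> =
     g \<xi> \<eta> - Pg X Y g \<xi> \<eta> + PFg X Y unBC unCD FL FB g \<xi> \<eta>"

end

theory Submission
  imports Defs
begin

(* Pg and PF^g are one Hermite-type blending operator applied to two sets of edge data: the
   traces of g, and the prescribed data.  This operator reproduces its data (traces on xi = -1
   and eta = -1, normal derivatives on xi = 1 and eta = 1) whenever the data agree at the corners,
   so V = g - Pg + PF^g has the Dirichlet data on AB and AD, V_xi = F^g_xi on BC and
   V_eta = F^g_eta on CD, while along BC and CD V differs from g only by blending polynomials in
   the tangential variable; F^g_xi and F^g_eta are built so that this gives the Robin conditions.
   Corner agreement holds at B and D by the flags and compatibility conditions, at C because the
   corner values solve both Robin conditions at once, and for the cross derivative at C by the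
   symmetry of second derivatives of g. *)

section \<open>Symmetry of mixed partial derivatives\<close>

lemma C1_on_has_pxi:
  "C1_on U f \<Longrightarrow> (a, b) \<in> U \<Longrightarrow> ((\<lambda>s. f s b) has_real_derivative pxi f a b) (at a)"
  unfolding C1_on_def pxi_def using DERIV_deriv_iff_real_differentiable by blast

lemma C1_on_has_peta:
  "C1_on U f \<Longrightarrow> (a, b) \<in> U \<Longrightarrow> ((\<lambda>t. f a t) has_real_derivative peta f a b) (at b)"
  unfolding C1_on_def peta_def using DERIV_deriv_iff_real_differentiable by blast

lemma second_difference_mean_value:
  fixes f d1 d12 :: "real \<Rightarrow> real \<Rightarrow> real"
  assumes "0 < h"
    and d1: "\<And>s t. s \<in> {a..a+h} \<Longrightarrow> t \<in> {b..b+h} \<Longrightarrow> ((\<lambda>s. f s t) has_real_derivative d1 s t) (at s)"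
    and d12: "\<And>s t. s \<in> {a..a+h} \<Longrightarrow> t \<in> {b..b+h} \<Longrightarrow> ((\<lambda>t. d1 s t) has_real_derivative d12 s t) (at t)"
  obtains s t where "s \<in> {a<..<a+h}" "t \<in> {b<..<b+h}"
    "f (a+h) (b+h) - f (a+h) b - f a (b+h) + f a b = h * h * d12 s t"
proof -
  have "\<And>s. a \<le> s \<Longrightarrow> s \<le> a + h \<Longrightarrow>
      ((\<lambda>s. f s (b+h) - f s b) has_real_derivative d1 s (b+h) - d1 s b) (at s)"
    using \<open>0 < h\<close> by (intro DERIV_diff d1) auto
  from MVT2[of a "a+h", OF _ this] \<open>0 < h\<close> obtain s where s: "a < s" "s < a + h"
    and "f (a+h) (b+h) - f (a+h) b - (f a (b+h) - f a b) = h * (d1 s (b+h) - d1 s b)"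
    by auto
  moreover have "\<And>t. b \<le> t \<Longrightarrow> t \<le> b + h \<Longrightarrow> ((\<lambda>t. d1 s t) has_real_derivative d12 s t) (at t)"
    using s by (intro d12) auto
  from MVT2[of b "b+h", OF _ this] \<open>0 < h\<close> obtain t where "b < t" "t < b + h"
    and "d1 s (b+h) - d1 s b = h * d12 s t"
    by auto
  ultimately show ?thesis
    using that[of s t] by (simp add: algebra_simps)
qed

lemma continuous_on_open_eventually_near:
  fixes f :: "'a::metric_space \<Rightarrow> 'b::metric_space"
  assumes "open W" "x \<in> W" "continuous_on W f" "0 < e"
  shows "\<forall>\<^sub>F y in nhds x. y \<in> W \<and> dist (f y) (f x) < e"
proof -
  have "isCont f x"
    using assms(1-3) continuous_on_eq_continuous_at by blast
  then have "(f \<longlongrightarrow> f x) (nhds x)"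
    by (simp add: isCont_def tendsto_at_iff_tendsto_nhds)
  then show ?thesis
    using tendstoD[OF _ \<open>0 < e\<close>] eventually_nhds_in_open[OF assms(1,2)] eventually_conj by blast
qed

lemma square_in_ball:
  fixes a b h d :: real
  assumes "s \<in> {a..a+h}" "t \<in> {b..b+h}" "2 * h < d"
  shows "dist (s, t) (a, b) < d"
proof -
  have "dist (s, t) (a, b) \<le> \<bar>s - a\<bar> + \<bar>t - b\<bar>"
    unfolding dist_Pair_Pair dist_real_def using sqrt_sum_squares_le_sum_abs[of "s - a" "t - b"] by simp
  with assms show ?thesis by auto
qed

lemma C2_on_pxi_peta_eq_peta_pxi:
  assumes W: "open W" "(a, b) \<in> W" and g: "C2_on W g"
  shows "pxi (peta g) a b = peta (pxi g) a b"
proof (rule dense_eq0_I[THEN eq_iff_diff_eq_0[THEN iffD2]])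
  fix e :: real assume "0 < e"
  have C1: "C1_on W g" "C1_on W (pxi g)" "C1_on W (peta g)"
    using g by (simp_all add: C2_on_def)
  let ?near = "\<lambda>m p. p \<in> W \<and> dist (m (fst p) (snd p)) (m a b) < e / 2"
  have "\<forall>\<^sub>F p in nhds (a, b). ?near (peta (pxi g)) p \<and> ?near (pxi (peta g)) p"
    using C1(2,3) \<open>0 < e\<close>
    by (intro eventually_conj continuous_on_open_eventually_near[OF W, where f = "\<lambda>p. _ (fst p) (snd p)",
          simplified]) (auto simp: C1_on_def)
  then obtain d where "d > 0" and d: "\<And>p. dist p (a, b) < d \<Longrightarrow> ?near (peta (pxi g)) p \<and> ?near (pxi (peta g)) p"
    unfolding eventually_nhds_metric by blast
  define h where "h = d / 4"
  have "0 < h" "2 * h < d"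
    using \<open>d > 0\<close> by (simp_all add: h_def)
  have in_square: "\<And>s t. s \<in> {a..a+h} \<Longrightarrow> t \<in> {b..b+h} \<Longrightarrow>
      ?near (peta (pxi g)) (s, t) \<and> ?near (pxi (peta g)) (s, t)"
    using d square_in_ball \<open>2 * h < d\<close> by blast
  obtain s1 t1 where s1t1: "s1 \<in> {a<..<a+h}" "t1 \<in> {b<..<b+h}"
    and D1: "g (a+h) (b+h) - g (a+h) b - g a (b+h) + g a b = h * h * peta (pxi g) s1 t1"
    using second_difference_mean_value[of h a b g "pxi g" "peta (pxi g)"] \<open>0 < h\<close> in_square
      C1_on_has_pxi[OF C1(1)] C1_on_has_peta[OF C1(2)] by blast
  obtain t2 s2 where s2t2: "t2 \<in> {b<..<b+h}" "s2 \<in> {a<..<a+h}"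
    and D2: "g (a+h) (b+h) - g a (b+h) - g (a+h) b + g a b = h * h * pxi (peta g) s2 t2"
    using second_difference_mean_value[of h b a "\<lambda>t s. g s t" "\<lambda>t s. peta g s t" "\<lambda>t s. pxi (peta g) s t"]
      \<open>0 < h\<close> in_square C1_on_has_peta[OF C1(1)] C1_on_has_pxi[OF C1(3)] by blast
  have "h * h * peta (pxi g) s1 t1 = h * h * pxi (peta g) s2 t2"
    using D1 D2 by linarith
  then have "peta (pxi g) s1 t1 = pxi (peta g) s2 t2"
    using \<open>0 < h\<close> by simp
  moreover have "dist (peta (pxi g) s1 t1) (peta (pxi g) a b) < e / 2"
    and "dist (pxi (peta g) s2 t2) (pxi (peta g) a b) < e / 2"
    using in_square[of s1 t1] in_square[of s2 t2] s1t1 s2t2 by auto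
  ultimately show "\<bar>pxi (peta g) a b - peta (pxi g) a b\<bar> \<le> e"
    unfolding dist_real_def by linarith
qed

section \<open>The blending operator\<close>

lemma has_real_derivative_blending_polys:
  "(rho0 has_real_derivative (- 15/16 + 15/8 * t^2 - 15/16 * t^4)) (at t)"
  "(rho1 has_real_derivative (15/16 - 15/8 * t^2 + 15/16 * t^4)) (at t)"
  "(ups0 has_real_derivative (- 7/16 - 3/4 * t + 15/8 * t^2 + 1/4 * t^3 - 15/16 * t^4)) (at t)"
  "(ups1 has_real_derivative (- 7/16 + 3/4 * t + 15/8 * t^2 - 1/4 * t^3 - 15/16 * t^4)) (at t)"
  "(om1 has_real_derivative (1/16 - 1/4 * t - 3/8 * t^2 + 1/4 * t^3 + 5/16 * t^4)) (at t)"
  unfolding rho0_def[abs_def] rho1_def[abs_def] ups0_def[abs_def] ups1_def[abs_def] om1_def[abs_def]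
    phi0_def phi1_def
  by (auto intro!: derivative_eq_intros simp: field_simps power2_eq_square power3_eq_cube eval_nat_numeral)

lemma deriv_blending_polys:
  "deriv rho0 = (\<lambda>t. - 15/16 + 15/8 * t^2 - 15/16 * t^4)"
  "deriv rho1 = (\<lambda>t. 15/16 - 15/8 * t^2 + 15/16 * t^4)"
  "deriv ups0 = (\<lambda>t. - 7/16 - 3/4 * t + 15/8 * t^2 + 1/4 * t^3 - 15/16 * t^4)"
  "deriv ups1 = (\<lambda>t. - 7/16 + 3/4 * t + 15/8 * t^2 - 1/4 * t^3 - 15/16 * t^4)"
  "deriv om1 = (\<lambda>t. 1/16 - 1/4 * t - 3/8 * t^2 + 1/4 * t^3 + 5/16 * t^4)"
  using has_real_derivative_blending_polys by (auto intro!: DERIV_imp_deriv)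

lemma blending_polys_has_deriv:
  "(rho0 has_real_derivative deriv rho0 t) (at t)"
  "(rho1 has_real_derivative deriv rho1 t) (at t)"
  "(ups0 has_real_derivative deriv ups0 t) (at t)"
  "(ups1 has_real_derivative deriv ups1 t) (at t)"
  "(om1 has_real_derivative deriv om1 t) (at t)"
  unfolding deriv_blending_polys by (fact has_real_derivative_blending_polys)+

lemma blending_polys_at_ends:
  "rho0 (-1) = 1" "rho0 1 = 0" "rho1 (-1) = 0" "rho1 1 = 1"
  "ups0 (-1) = 0" "ups0 1 = 0" "ups1 (-1) = 0" "ups1 1 = 0" "om1 (-1) = 0" "om1 1 = 0"
  "deriv rho0 (-1) = 0" "deriv rho0 1 = 0" "deriv rho1 (-1) = 0" "deriv rho1 1 = 0"
  "deriv ups0 (-1) = 1" "deriv ups0 1 = 0" "deriv ups1 (-1) = 0" "deriv ups1 1 = 1"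
  "deriv om1 (-1) = 0" "deriv om1 1 = 0"
  by (simp_all add: deriv_blending_polys rho0_def rho1_def ups0_def ups1_def om1_def phi0_def phi1_def)

lemma blending_polys_second_deriv_at_1:
  "(deriv rho0 has_real_derivative 0) (at 1)"
  "(deriv ups0 has_real_derivative 0) (at 1)"
  "(deriv ups1 has_real_derivative 0) (at 1)"
  "(deriv om1 has_real_derivative 1) (at 1)"
  unfolding deriv_blending_polys by (auto intro!: derivative_eq_intros)

text \<open>The operator underlying both Pg and PF^g: L and B are the traces on xi = -1 and eta = -1,
  R and T the normal derivatives on xi = 1 and eta = 1, c00, c01, c10, c11 the corner values
  F(A), F_eta(D), F_xi(B), F_xi_eta(C), and cB, cD, cC the flagged corner terms at B, D and C.\<close>

definition blend ::
  "(real \<Rightarrow> real) \<Rightarrow> (real \<Rightarrow> real) \<Rightarrow> (real \<Rightarrow> real) \<Rightarrow> (real \<Rightarrow> real) \<Rightarrow>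
   real \<Rightarrow> real \<Rightarrow> real \<Rightarrow> real \<Rightarrow> real \<Rightarrow> real \<Rightarrow> real \<Rightarrow> real \<Rightarrow> real \<Rightarrow> real" where
  "blend L R B T c00 c01 c10 c11 cB cD cC \<xi> \<eta> =
     L \<eta> * rho0 \<xi> + R \<eta> * ups1 \<xi> + B \<xi> * rho0 \<eta> + T \<xi> * ups1 \<eta>
     - (c00 * rho0 \<eta> + c01 * ups1 \<eta>) * rho0 \<xi>
     - (c10 * rho0 \<eta> + c11 * ups1 \<eta>) * ups1 \<xi>
     + cB * ups0 \<eta> * rho1 \<xi> + (cD * ups0 \<xi> + cC * om1 \<xi>) * rho1 \<eta>"

lemma blend_left_edge:
  "B (-1) = c00 \<Longrightarrow> T (-1) = c01 \<Longrightarrow> blend L R B T c00 c01 c10 c11 cB cD cC (-1) \<eta> = L \<eta>"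
  by (simp add: blend_def blending_polys_at_ends)

lemma blend_bottom_edge:
  "L (-1) = c00 \<Longrightarrow> R (-1) = c10 \<Longrightarrow> blend L R B T c00 c01 c10 c11 cB cD cC \<xi> (-1) = B \<xi>"
  by (simp add: blend_def blending_polys_at_ends)

lemma blend_right_edge:
  "blend L R B T c00 c01 c10 c11 cB cD cC 1 \<eta> = B 1 * rho0 \<eta> + T 1 * ups1 \<eta> + cB * ups0 \<eta>"
  by (simp add: blend_def blending_polys_at_ends)

lemma blend_top_edge:
  "blend L R B T c00 c01 c10 c11 cB cD cC \<xi> 1 = L 1 * rho0 \<xi> + R 1 * ups1 \<xi> + cD * ups0 \<xi> + cC * om1 \<xi>"
  by (simp add: blend_def blending_polys_at_ends)

lemma blend_has_xi_derivative_at_right_edge: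
  assumes "(B has_real_derivative c10) (at 1)" "(T has_real_derivative c11) (at 1)"
  shows "((\<lambda>\<xi>. blend L R B T c00 c01 c10 c11 cB cD cC \<xi> \<eta>) has_real_derivative R \<eta>) (at 1)"
  unfolding blend_def
  by (rule derivative_eq_intros assms blending_polys_has_deriv | simp add: blending_polys_at_ends)+

lemma blend_has_eta_derivative_at_top_edge:
  assumes "(L has_real_derivative c01) (at 1)" "(R has_real_derivative c11) (at 1)"
  shows "((\<lambda>\<eta>. blend L R B T c00 c01 c10 c11 cB cD cC \<xi> \<eta>) has_real_derivative T \<xi>) (at 1)"
  unfolding blend_def
  by (rule derivative_eq_intros assms blending_polys_has_deriv | simp add: blending_polys_at_ends)+

section \<open>Edge coefficients\<close>

lemma differentiable_sqrt_pos:
  fixes f :: "real \<Rightarrow> real"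
  assumes "f differentiable (at x)" "0 < f x"
  shows "(\<lambda>t. sqrt (f t)) differentiable (at x)"
proof -
  have "sqrt differentiable (at (f x))"
    using DERIV_real_sqrt[OF assms(2)] real_differentiable_def by blast
  then show ?thesis
    using differentiable_chain_at[OF assms(1)] by (simp add: o_def)
qed

lemma neta2_pos: "detJ X Y a b \<noteq> 0 \<Longrightarrow> 0 < neta2 X Y a b"
  by (auto simp: neta2_def detJ_def sum_power2_gt_zero_iff)

lemma nxi2_pos: "detJ X Y a b \<noteq> 0 \<Longrightarrow> 0 < nxi2 X Y a b"
  by (auto simp: nxi2_def detJ_def sum_power2_gt_zero_iff)

lemma S_CD_eq:
  assumes "detJ X Y a 1 \<noteq> 0"
  shows "S_CD X Y a = - dotJ X Y a 1 / nxi2 X Y a 1"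
proof -
  have "0 < nxi2 X Y a 1"
    using nxi2_pos[OF assms] .
  then show ?thesis
    using assms by (simp add: S_CD_def KxCD_def KyCD_def field_simps real_sqrt_mult[symmetric])
qed

lemma S_BC_eq_0_iff: "detJ X Y 1 b \<noteq> 0 \<Longrightarrow> S_BC X Y b = 0 \<longleftrightarrow> dotJ X Y 1 b = 0"
  using neta2_pos[of X Y 1 b] by (auto simp: S_BC_def)

lemma S_CD_eq_0_iff: "detJ X Y a 1 \<noteq> 0 \<Longrightarrow> S_CD X Y a = 0 \<longleftrightarrow> dotJ X Y a 1 = 0"
  using nxi2_pos[of X Y a 1] by (auto simp: S_CD_eq)

lemma S_BC_mult_S_CD_neq_1:
  assumes "detJ X Y 1 1 \<noteq> 0"
  shows "S_BC X Y 1 * S_CD X Y 1 \<noteq> 1"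
proof -
  \<comment> \<open>S_BC(1) S_CD(1) is the squared cosine of the angle between x_xi and x_eta at C.\<close>
  have lagrange: "nxi2 X Y 1 1 * neta2 X Y 1 1 - (dotJ X Y 1 1)\<^sup>2 = (detJ X Y 1 1)\<^sup>2"
    by (simp add: nxi2_def neta2_def dotJ_def detJ_def power2_eq_square algebra_simps)
  have "S_BC X Y 1 * S_CD X Y 1 = (dotJ X Y 1 1)\<^sup>2 / (nxi2 X Y 1 1 * neta2 X Y 1 1)"
    using assms by (simp add: S_CD_eq S_BC_def power2_eq_square mult.commute)
  moreover have "(dotJ X Y 1 1)\<^sup>2 \<noteq> nxi2 X Y 1 1 * neta2 X Y 1 1"
    using lagrange assms by auto
  ultimately show ?thesis
    by auto
qed

lemma corner_C_solves_robin_system: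
  assumes "detJ X Y 1 1 \<noteq> 0"
  shows "FaXiC X Y unBC unCD + S_BC X Y 1 * FaEtaC X Y unBC unCD = T_BC X Y unBC 1"
    and "FaEtaC X Y unBC unCD + S_CD X Y 1 * FaXiC X Y unBC unCD = T_CD X Y unCD 1"
proof -
  have "1 - S_BC X Y 1 * S_CD X Y 1 \<noteq> 0"
    using S_BC_mult_S_CD_neq_1[OF assms] by simp
  then show "FaXiC X Y unBC unCD + S_BC X Y 1 * FaEtaC X Y unBC unCD = T_BC X Y unBC 1"
    and "FaEtaC X Y unBC unCD + S_CD X Y 1 * FaXiC X Y unBC unCD = T_CD X Y unCD 1"
    unfolding FaXiC_def FaEtaC_def by (simp_all add: divide_simps) (simp_all add: algebra_simps)
qed

lemma
  assumes X: "C2_on U X" and Y: "C2_on U Y" and "(1, \<eta>) \<in> U" and det: "detJ X Y 1 \<eta> \<noteq> 0"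
    and un: "(\<lambda>s. unBC (X 1 s, Y 1 s)) differentiable (at \<eta>)"
  shows S_BC_differentiable: "S_BC X Y differentiable (at \<eta>)"
    and T_BC_differentiable: "T_BC X Y unBC differentiable (at \<eta>)"
proof -
  have "(\<lambda>t. pxi X 1 t) differentiable (at \<eta>)" "(\<lambda>t. peta X 1 t) differentiable (at \<eta>)"
    "(\<lambda>t. pxi Y 1 t) differentiable (at \<eta>)" "(\<lambda>t. peta Y 1 t) differentiable (at \<eta>)"
    using X Y \<open>(1, \<eta>) \<in> U\<close> by (auto simp: C2_on_def C1_on_def)
  then have dot: "(\<lambda>t. dotJ X Y 1 t) differentiable (at \<eta>)"
    and n: "(\<lambda>t. neta2 X Y 1 t) differentiable (at \<eta>)"
    and d: "(\<lambda>t. detJ X Y 1 t) differentiable (at \<eta>)"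
    unfolding dotJ_def neta2_def detJ_def by (auto intro!: derivative_intros)
  show "S_BC X Y differentiable (at \<eta>)"
    unfolding S_BC_def[abs_def] using dot n neta2_pos[OF det] by (auto intro!: derivative_intros)
  show "T_BC X Y unBC differentiable (at \<eta>)"
    unfolding T_BC_def[abs_def] KxBC_def
    using un differentiable_sqrt_pos[OF n neta2_pos[OF det]] d det neta2_pos[OF det]
    by (auto intro!: derivative_intros)
qed

lemma
  assumes X: "C2_on U X" and Y: "C2_on U Y" and "(\<xi>, 1) \<in> U" and det: "detJ X Y \<xi> 1 \<noteq> 0"
    and un: "(\<lambda>s. unCD (X s 1, Y s 1)) differentiable (at \<xi>)"
  shows S_CD_differentiable: "S_CD X Y differentiable (at \<xi>)"
    and T_CD_differentiable: "T_CD X Y unCD differentiable (at \<xi>)"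
proof -
  have "(\<lambda>s. pxi X s 1) differentiable (at \<xi>)" "(\<lambda>s. peta X s 1) differentiable (at \<xi>)"
    "(\<lambda>s. pxi Y s 1) differentiable (at \<xi>)" "(\<lambda>s. peta Y s 1) differentiable (at \<xi>)"
    using X Y \<open>(\<xi>, 1) \<in> U\<close> by (auto simp: C2_on_def C1_on_def)
  then have dot: "(\<lambda>s. dotJ X Y s 1) differentiable (at \<xi>)"
    and n: "(\<lambda>s. nxi2 X Y s 1) differentiable (at \<xi>)"
    and d: "(\<lambda>s. detJ X Y s 1) differentiable (at \<xi>)"
    unfolding dotJ_def nxi2_def detJ_def by (auto intro!: derivative_intros)
  have sq: "(\<lambda>s. sqrt (nxi2 X Y s 1)) differentiable (at \<xi>)" "sqrt (nxi2 X Y \<xi> 1) \<noteq> 0"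
    using differentiable_sqrt_pos[OF n nxi2_pos[OF det]] nxi2_pos[OF det] by auto
  show "S_CD X Y differentiable (at \<xi>)"
    unfolding S_CD_def[abs_def] KxCD_def KyCD_def
    by (intro derivative_intros dot sq d) (use sq det in auto)
  show "T_CD X Y unCD differentiable (at \<xi>)"
    unfolding T_CD_def[abs_def] KyCD_def
    using un sq d det by (auto intro!: derivative_intros)
qed

section \<open>Corner values of the data of PF^g\<close>

lemma FgXi_at_minus_1:
  assumes "detJ X Y 1 (-1) \<noteq> 0" and "lamB X Y = 0 \<longrightarrow> deriv FB 1 = T_BC X Y unBC (-1)"
  shows "FgXi X Y unBC unCD FB g (-1) = deriv FB 1"
proof (cases "lamB X Y = 0")
  case True
  then have "S_BC X Y (-1) = 0"
    using S_BC_eq_0_iff[OF assms(1)] by (simp add: lamB_def split: if_splits)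
  with True assms(2) show ?thesis
    by (simp add: FgXi_def blending_polys_at_ends)
next
  case False
  then have "lamB X Y = 1" "S_BC X Y (-1) \<noteq> 0"
    using S_BC_eq_0_iff[OF assms(1)] by (auto simp: lamB_def split: if_splits)
  then show ?thesis
    by (simp add: FgXi_def FaEtaB_def blending_polys_at_ends)
qed

lemma FgEta_at_minus_1:
  assumes "detJ X Y (-1) 1 \<noteq> 0" and "lamD X Y = 0 \<longrightarrow> deriv FL 1 = T_CD X Y unCD (-1)"
  shows "FgEta X Y unBC unCD FL g (-1) = deriv FL 1"
proof (cases "lamD X Y = 0")
  case True
  then have "S_CD X Y (-1) = 0"
    using S_CD_eq_0_iff[OF assms(1)] by (simp add: lamD_def split: if_splits)
  with True assms(2) show ?thesis
    by (simp add: FgEta_def blending_polys_at_ends)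
next
  case False
  then have "lamD X Y = 1" "S_CD X Y (-1) \<noteq> 0"
    using S_CD_eq_0_iff[OF assms(1)] by (auto simp: lamD_def split: if_splits)
  then show ?thesis
    by (simp add: FgEta_def FaXiD_def blending_polys_at_ends)
qed

lemma FgXi_at_1: "detJ X Y 1 1 \<noteq> 0 \<Longrightarrow> FgXi X Y unBC unCD FB g 1 = FaXiC X Y unBC unCD"
  using corner_C_solves_robin_system(1)[of X Y unBC unCD]
  by (simp add: FgXi_def blending_polys_at_ends algebra_simps)

lemma FgEta_at_1: "detJ X Y 1 1 \<noteq> 0 \<Longrightarrow> FgEta X Y unBC unCD FL g 1 = FaEtaC X Y unBC unCD"
  using corner_C_solves_robin_system(2)[of X Y unBC unCD]
  by (simp add: FgEta_def blending_polys_at_ends algebra_simps)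

lemma FgXi_has_derivative_at_1:
  assumes "S_BC X Y differentiable (at 1)" "T_BC X Y unBC differentiable (at 1)"
    and "((\<lambda>t. peta g 1 t) has_real_derivative peta (peta g) 1 1) (at 1)"
  shows "(FgXi X Y unBC unCD FB g has_real_derivative FgXiEta X Y unBC unCD g) (at 1)"
proof -
  note derivs = assms(1,2)[unfolded DERIV_deriv_iff_real_differentiable[symmetric]]
    assms(3) blending_polys_second_deriv_at_1
  show ?thesis
    unfolding FgXi_def[abs_def]
    by (rule derivative_eq_intros derivs refl | simp add: blending_polys_at_ends FgXiEta_def algebra_simps)+
qed

lemma FgEta_has_derivative_at_1:
  assumes "S_CD X Y differentiable (at 1)" "T_CD X Y unCD differentiable (at 1)"
    and "((\<lambda>s. pxi g s 1) has_real_derivative pxi (pxi g) 1 1) (at 1)"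
    and "detJ X Y 1 1 \<noteq> 0"
    and compatC: "lamC X Y = 0 \<longrightarrow>
        deriv (T_CD X Y unCD) 1 - deriv (S_CD X Y) 1 * FaXiC X Y unBC unCD
      = deriv (T_BC X Y unBC) 1 - deriv (S_BC X Y) 1 * FaEtaC X Y unBC unCD"
  shows "(FgEta X Y unBC unCD FL g has_real_derivative FgXiEta X Y unBC unCD g) (at 1)"
proof -
  note derivs = assms(1,2)[unfolded DERIV_deriv_iff_real_differentiable[symmetric]]
    assms(3) blending_polys_second_deriv_at_1
  have "(FgEta X Y unBC unCD FL g has_real_derivative
      deriv (T_CD X Y unCD) 1 - deriv (S_CD X Y) 1 * FaXiC X Y unBC unCD
      - S_CD X Y 1 * (pxi (pxi g) 1 1 - lamC X Y * (pxi (pxi g) 1 1 - FgXiXi X Y unBC unCD g))) (at 1)"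
    unfolding FgEta_def[abs_def]
    by (rule derivative_eq_intros derivs refl | simp add: blending_polys_at_ends algebra_simps)+
  moreover have "deriv (T_CD X Y unCD) 1 - deriv (S_CD X Y) 1 * FaXiC X Y unBC unCD
      - S_CD X Y 1 * (pxi (pxi g) 1 1 - lamC X Y * (pxi (pxi g) 1 1 - FgXiXi X Y unBC unCD g))
      = FgXiEta X Y unBC unCD g"
  proof (cases "lamC X Y = 0")
    case True
    then have "S_CD X Y 1 = 0" "S_BC X Y 1 = 0"
      using S_CD_eq_0_iff[OF assms(4)] S_BC_eq_0_iff[OF assms(4)] by (simp_all add: lamC_def split: if_splits)
    with True compatC show ?thesis
      by (simp add: FgXiEta_def)
  next
    case False
    then have "lamC X Y = 1" "S_CD X Y 1 \<noteq> 0"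
      using S_CD_eq_0_iff[OF assms(4)] by (auto simp: lamC_def split: if_splits)
    then show ?thesis
      by (simp add: FgXiEta_def FgXiXi_def RC_def field_simps)
  qed
  ultimately show ?thesis
    by simp
qed

section \<open>Boundary conditions for V\<close>

lemma Pg_eq_blend:
  "Pg X Y g = blend (g (-1)) (pxi g 1) (\<lambda>s. g s (-1)) (\<lambda>s. peta g s 1)
     (g (-1) (-1)) (peta g (-1) 1) (pxi g 1 (-1)) (peta (pxi g) 1 1)
     (lamB X Y * peta g 1 (-1)) (lamD X Y * pxi g (-1) 1) (lamC X Y * pxi (pxi g) 1 1)"
  by (intro ext) (simp add: Pg_def blend_def)

lemma PFg_eq_blend:
  "PFg X Y unBC unCD FL FB g = blend FL (FgXi X Y unBC unCD FB g) FB (FgEta X Y unBC unCD FL g)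
     (FL (-1)) (deriv FL 1) (deriv FB 1) (FgXiEta X Y unBC unCD g)
     (lamB X Y * FaEtaB X Y unBC FB) (lamD X Y * FaXiD X Y unCD FL) (lamC X Y * FgXiXi X Y unBC unCD g)"
  by (intro ext) (simp add: PFg_def blend_def)

lemma Vfun_left_edge:
  assumes "FL (-1) = FB (-1)" "FgEta X Y unBC unCD FL g (-1) = deriv FL 1"
  shows "Vfun X Y unBC unCD FL FB g (-1) \<eta> = FL \<eta>"
  using assms by (simp add: Vfun_def Pg_eq_blend PFg_eq_blend blend_left_edge)

lemma Vfun_bottom_edge:
  assumes "FL (-1) = FB (-1)" "FgXi X Y unBC unCD FB g (-1) = deriv FB 1"
  shows "Vfun X Y unBC unCD FL FB g \<xi> (-1) = FB \<xi>"
  using assms by (simp add: Vfun_def Pg_eq_blend PFg_eq_blend blend_bottom_edge)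

lemma Vfun_right_edge_robin:
  assumes W: "open W" "{-1..1} \<times> {-1..1} \<subseteq> W" and g: "C2_on W g" and "\<eta> \<in> {-1..1}"
    and FB: "FB differentiable (at 1)"
    and FgEta_deriv: "(FgEta X Y unBC unCD FL g has_real_derivative FgXiEta X Y unBC unCD g) (at 1)"
    and FgEta_C: "FgEta X Y unBC unCD FL g 1 = FaEtaC X Y unBC unCD"
  shows "pxi (Vfun X Y unBC unCD FL FB g) 1 \<eta>
      + S_BC X Y \<eta> * peta (Vfun X Y unBC unCD FL FB g) 1 \<eta> = T_BC X Y unBC \<eta>"
proof -
  have C1: "C1_on W g" "C1_on W (peta g)"
    using g by (simp_all add: C2_on_def)
  have in_W: "(1, \<eta>) \<in> W" "(1, -1) \<in> W" "(1, 1) \<in> W"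
    using W(2) \<open>\<eta> \<in> {-1..1}\<close> by auto
  have "((\<lambda>s. peta g s 1) has_real_derivative peta (pxi g) 1 1) (at 1)"
    using C1_on_has_pxi[OF C1(2) in_W(3)] C2_on_pxi_peta_eq_peta_pxi[OF W(1) in_W(3) g] by simp
  then have "((\<lambda>\<xi>. Vfun X Y unBC unCD FL FB g \<xi> \<eta>) has_real_derivative
      pxi g 1 \<eta> - pxi g 1 \<eta> + FgXi X Y unBC unCD FB g \<eta>) (at 1)"
    unfolding Vfun_def Pg_eq_blend PFg_eq_blend
    using FB[unfolded DERIV_deriv_iff_real_differentiable[symmetric]]
    by (intro DERIV_add DERIV_diff blend_has_xi_derivative_at_right_edge FgEta_deriv
        C1_on_has_pxi[OF C1(1) in_W(1)] C1_on_has_pxi[OF C1(1) in_W(2)])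
  then have pxi_V: "pxi (Vfun X Y unBC unCD FL FB g) 1 \<eta> = FgXi X Y unBC unCD FB g \<eta>"
    unfolding pxi_def by (simp add: DERIV_imp_deriv)
  have "(\<lambda>t. Vfun X Y unBC unCD FL FB g 1 t) = (\<lambda>t. g 1 t - (g 1 (-1) - FB 1) * rho0 t
      - (peta g 1 1 - FaEtaC X Y unBC unCD) * ups1 t
      - lamB X Y * (peta g 1 (-1) - FaEtaB X Y unBC FB) * ups0 t)" (is "_ = ?V1")
    by (simp add: Vfun_def Pg_eq_blend PFg_eq_blend blend_right_edge FgEta_C algebra_simps)
  moreover have "(?V1 has_real_derivative
      peta g 1 \<eta> - (g 1 (-1) - FB 1) * deriv rho0 \<eta>
      - (peta g 1 1 - FaEtaC X Y unBC unCD) * deriv ups1 \<eta>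
      - lamB X Y * (peta g 1 (-1) - FaEtaB X Y unBC FB) * deriv ups0 \<eta>) (at \<eta>)"
    (is "(_ has_real_derivative ?V1') _")
    by (intro DERIV_diff DERIV_cmult C1_on_has_peta[OF C1(1) in_W(1)] blending_polys_has_deriv)
  ultimately have "peta (Vfun X Y unBC unCD FL FB g) 1 \<eta> = ?V1'"
    unfolding peta_def by (simp add: DERIV_imp_deriv)
  with pxi_V show ?thesis
    by (simp add: FgXi_def)
qed

lemma Vfun_top_edge_robin:
  assumes W: "open W" "{-1..1} \<times> {-1..1} \<subseteq> W" and g: "C2_on W g" and "\<xi> \<in> {-1..1}"
    and FL: "FL differentiable (at 1)"
    and FgXi_deriv: "(FgXi X Y unBC unCD FB g has_real_derivative FgXiEta X Y unBC unCD g) (at 1)"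
    and FgXi_C: "FgXi X Y unBC unCD FB g 1 = FaXiC X Y unBC unCD"
  shows "peta (Vfun X Y unBC unCD FL FB g) \<xi> 1
      + S_CD X Y \<xi> * pxi (Vfun X Y unBC unCD FL FB g) \<xi> 1 = T_CD X Y unCD \<xi>"
proof -
  have C1: "C1_on W g" "C1_on W (pxi g)"
    using g by (simp_all add: C2_on_def)
  have in_W: "(\<xi>, 1) \<in> W" "(-1, 1) \<in> W" "(1, 1) \<in> W"
    using W(2) \<open>\<xi> \<in> {-1..1}\<close> by auto
  have "((\<lambda>\<eta>. Vfun X Y unBC unCD FL FB g \<xi> \<eta>) has_real_derivative
      peta g \<xi> 1 - peta g \<xi> 1 + FgEta X Y unBC unCD FL g \<xi>) (at 1)"
    unfolding Vfun_def Pg_eq_blend PFg_eq_blend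
    using FL[unfolded DERIV_deriv_iff_real_differentiable[symmetric]]
    by (intro DERIV_add DERIV_diff blend_has_eta_derivative_at_top_edge FgXi_deriv
        C1_on_has_peta[OF C1(1) in_W(1)] C1_on_has_peta[OF C1(1) in_W(2)] C1_on_has_peta[OF C1(2) in_W(3)])
  then have peta_V: "peta (Vfun X Y unBC unCD FL FB g) \<xi> 1 = FgEta X Y unBC unCD FL g \<xi>"
    unfolding peta_def by (simp add: DERIV_imp_deriv)
  have "(\<lambda>s. Vfun X Y unBC unCD FL FB g s 1) = (\<lambda>s. g s 1 - (g (-1) 1 - FL 1) * rho0 s
      - (pxi g 1 1 - FaXiC X Y unBC unCD) * ups1 s
      - lamD X Y * (pxi g (-1) 1 - FaXiD X Y unCD FL) * ups0 s
      - lamC X Y * (pxi (pxi g) 1 1 - FgXiXi X Y unBC unCD g) * om1 s)" (is "_ = ?V1")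
    by (simp add: Vfun_def Pg_eq_blend PFg_eq_blend blend_top_edge FgXi_C algebra_simps)
  moreover have "(?V1 has_real_derivative
      pxi g \<xi> 1 - (g (-1) 1 - FL 1) * deriv rho0 \<xi>
      - (pxi g 1 1 - FaXiC X Y unBC unCD) * deriv ups1 \<xi>
      - lamD X Y * (pxi g (-1) 1 - FaXiD X Y unCD FL) * deriv ups0 \<xi>
      - lamC X Y * (pxi (pxi g) 1 1 - FgXiXi X Y unBC unCD g) * deriv om1 \<xi>) (at \<xi>)"
    (is "(_ has_real_derivative ?V1') _")
    by (intro DERIV_diff DERIV_cmult C1_on_has_pxi[OF C1(1) in_W(1)] blending_polys_has_deriv)
  ultimately have "pxi (Vfun X Y unBC unCD FL FB g) \<xi> 1 = ?V1'"
    unfolding pxi_def by (simp add: DERIV_imp_deriv)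
  with peta_V show ?thesis
    by (simp add: FgEta_def)
qed

theorem mainTheorem2:
  fixes X Y :: "real \<Rightarrow> real \<Rightarrow> real"
    and FL FB :: "real \<Rightarrow> real"
    and unBC unCD :: "real \<times> real \<Rightarrow> real"
    and g :: "real \<Rightarrow> real \<Rightarrow> real"
    and U W :: "(real \<times> real) set"
  assumes U: "open U" "{-1..1} \<times> {-1..1} \<subseteq> U"
    and smoothX: "C2_on U X" and smoothY: "C2_on U Y"
    and nonsing: "\<forall>a\<in>{-1..1}. \<forall>b\<in>{-1..1}. detJ X Y a b \<noteq> 0"
    and FL_diff: "\<forall>t\<in>{-1..1}. FL differentiable (at t)"
    and FB_diff: "\<forall>t\<in>{-1..1}. FB differentiable (at t)"
    and corner: "FL (-1) = FB (-1)"
    and unBC_diff: "\<forall>t\<in>{-1..1}. (\<lambda>s. unBC (X 1 s, Y 1 s)) differentiable (at t)"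
    and unCD_diff: "\<forall>t\<in>{-1..1}. (\<lambda>s. unCD (X s 1, Y s 1)) differentiable (at t)"
    and compatB: "lamB X Y = 0 \<longrightarrow> deriv FB 1 = T_BC X Y unBC (-1)"
    and compatD: "lamD X Y = 0 \<longrightarrow> deriv FL 1 = T_CD X Y unCD (-1)"
    and compatC: "lamC X Y = 0 \<longrightarrow>
        deriv (T_CD X Y unCD) 1 - deriv (S_CD X Y) 1 * FaXiC X Y unBC unCD
      = deriv (T_BC X Y unBC) 1 - deriv (S_BC X Y) 1 * FaEtaC X Y unBC unCD"
    and W: "open W" "{-1..1} \<times> {-1..1} \<subseteq> W"
    and smooth_g: "C2_on W g"
  shows "\<forall>\<xi>\<in>{-1..1}. \<forall>\<eta>\<in>{-1..1}.
           Vfun X Y unBC unCD FL FB g (-1) \<eta> = FL \<eta>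
         \<and> Vfun X Y unBC unCD FL FB g \<xi> (-1) = FB \<xi>
         \<and> pxi (Vfun X Y unBC unCD FL FB g) 1 \<eta>
             + S_BC X Y \<eta> * peta (Vfun X Y unBC unCD FL FB g) 1 \<eta> = T_BC X Y unBC \<eta>
         \<and> peta (Vfun X Y unBC unCD FL FB g) \<xi> 1
             + S_CD X Y \<xi> * pxi (Vfun X Y unBC unCD FL FB g) \<xi> 1 = T_CD X Y unCD \<xi>"
proof -
  have one: "(1::real) \<in> {-1..1}" and "(1, 1) \<in> U" "(1, 1) \<in> W"
    using U(2) W(2) by auto
  have det: "detJ X Y 1 1 \<noteq> 0" "detJ X Y 1 (-1) \<noteq> 0" "detJ X Y (-1) 1 \<noteq> 0"
    using nonsing by auto
  have g: "C1_on W (pxi g)" "C1_on W (peta g)"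
    using smooth_g by (simp_all add: C2_on_def)
  have FgXi_deriv: "(FgXi X Y unBC unCD FB g has_real_derivative FgXiEta X Y unBC unCD g) (at 1)"
    using unBC_diff one
    by (intro FgXi_has_derivative_at_1 S_BC_differentiable[OF smoothX smoothY]
        T_BC_differentiable[OF smoothX smoothY] C1_on_has_peta[OF g(2)]
        \<open>(1, 1) \<in> U\<close> \<open>(1, 1) \<in> W\<close> det(1)) auto
  have FgEta_deriv: "(FgEta X Y unBC unCD FL g has_real_derivative FgXiEta X Y unBC unCD g) (at 1)"
    using unCD_diff one
    by (intro FgEta_has_derivative_at_1 S_CD_differentiable[OF smoothX smoothY]
        T_CD_differentiable[OF smoothX smoothY] C1_on_has_pxi[OF g(1)]
        \<open>(1, 1) \<in> U\<close> \<open>(1, 1) \<in> W\<close> det(1) compatC) auto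
  have FgEta_D: "FgEta X Y unBC unCD FL g (-1) = deriv FL 1"
    and FgXi_B: "FgXi X Y unBC unCD FB g (-1) = deriv FB 1"
    and FgEta_C: "FgEta X Y unBC unCD FL g 1 = FaEtaC X Y unBC unCD"
    and FgXi_C: "FgXi X Y unBC unCD FB g 1 = FaXiC X Y unBC unCD"
    using FgEta_at_minus_1[OF det(3) compatD] FgXi_at_minus_1[OF det(2) compatB]
      FgEta_at_1[OF det(1)] FgXi_at_1[OF det(1)] by blast+
  show ?thesis
    using Vfun_left_edge[where FL = FL and FB = FB, OF corner FgEta_D]
      Vfun_bottom_edge[where FL = FL and FB = FB, OF corner FgXi_B]
      Vfun_right_edge_robin[OF W smooth_g _ FB_diff[rule_format, OF one] FgEta_deriv FgEta_C]
      Vfun_top_edge_robin[OF W smooth_g _ FL_diff[rule_format, OF one] FgXi_deriv FgXi_C]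
    by blast
qed

end
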